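(* Let $1\le j\le d$ and let $\bm{x}_1,\dots,\bm{x}_{j+1}\in\mathbb{R}^d$ be affinely independent points (the vertices of a nondegenerate $j$-simplex). Let $d_{st}^2=\|\bm{x}_s-\bm{x}_t\|^2$, and let $\hat{B}$ be the $(j+2)\times(j+2)$ Cayley–Menger matrix $$\hat{B}=\begin{bmatrix}0 & 1 & 1 & \cdots & 1\\ 1 & 0 & d_{12}^2 & \cdots & d_{1,j+1}^2\\ 1 & d_{21}^2 & 0 & \cdots & d_{2,j+1}^2\\ \vdots & \vdots & \vdots & \ddots & \vdots\\ 1 & d_{j+1,1}^2 & d_{j+1,2}^2 & \cdots & 0\end{bmatrix}.$$ Let $\gamma=j!\,C$, where $C=\sqrt{\frac{(-1)^{j+1}}{2^j (j!)^2}\det(\hat{B})}$ is the $j$-dimensional content of the simplex. Then for each $p\in\{1,\dots,j+1\}$, $$\frac{\partial \gamma}{\partial \bm{x}_p}=\frac{(-1)^{j+1}/2^j}{\gamma}\sum_{\substack{m=1\\ m\neq p}}^{j+1}A_{pm}\,\bm{D}_{pm},$$ where $\bm{D}_{pm}=2(\bm{x}_p-\bm{x}_m)$ and $A_{pm}$ is the entry in the $(p+1)$-th row and $(m+1)$-th column of the adjugate matrix $\mathrm{adj}(\hat{B})$.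
   Context: $\gamma$ is called the content distortion factor: the ratio of the content (volume) of the $j$-simplex to the content $1/j!$ of the unit orthogonal $j$-simplex. Rows and columns of $\hat B$ are indexed $1,\dots,j+2$, with the first row/column being the border of ones, and row/column $s+1$ corresponding to vertex $\bm{x}_s$. The derivative with respect to $\bm{x}_p\in\mathbb{R}^d$ is the gradient vector in $\mathbb{R}^d$. *)

theory Defs
  imports "HOL-Analysis.Analysis" "Jordan_Normal_Form.Determinant"
begin

text \<open>Cayley-Menger matrix of the points x 1, ..., x (j+1): (j+2) x (j+2), 0-indexed;
  row/column 0 is the border, row/column s (1 \<le> s \<le> j+1) corresponds to vertex x s.\<close>
definition cm_matrix :: "nat \<Rightarrow> (nat \<Rightarrow> 'a::euclidean_space) \<Rightarrow> real Matrix.mat" where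
  "cm_matrix j x = Matrix.mat (j+2) (j+2)
     (\<lambda>(r,c). if r = c then 0 else if r = 0 \<or> c = 0 then 1 else (dist (x r) (x c))\<^sup>2)"

definition simplex_content :: "nat \<Rightarrow> (nat \<Rightarrow> 'a::euclidean_space) \<Rightarrow> real" where
  "simplex_content j x =
     sqrt ((-1) ^ (j+1) / (2 ^ j * (fact j)\<^sup>2) * Determinant.det (cm_matrix j x))"

definition distortion :: "nat \<Rightarrow> (nat \<Rightarrow> 'a::euclidean_space) \<Rightarrow> real" where
  "distortion j x = fact j * simplex_content j x"

end

theory Submission
  imports Defs
begin

text \<open>Subtracting the first vertex shows that the Cayley-Menger matrix is congruent, by a unit
  lower triangular matrix, to the block diagonal matrix with blocks [[0,1],[1,0]] and -2 G, where
  G is the Gram matrix of the edge vectors x s - x 1. Hence det B = -(-2)^j det G, and affine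
  independence makes (-1)^(j+1) det B positive, so gamma = sqrt ((-1)^(j+1) det B / 2^j) is
  differentiable. By Jacobi's formula the derivative of det B is the sum of the entry derivatives weighted by
  cofactors; moving x p only changes row and column p, the entry d_pm^2 having gradient
  2 (x p - x m), and the symmetry of B makes both contributions equal.\<close>

subsection \<open>Determinants\<close>

lemma mat_delete_cong_except_row:
  assumes "A \<in> carrier_mat n n" "B \<in> carrier_mat n n"
    and "\<And>r c. r < n \<Longrightarrow> c < n \<Longrightarrow> r \<noteq> i \<Longrightarrow> A $$ (r,c) = B $$ (r,c)"
  shows "mat_delete A i j = mat_delete B i j"
  using assms unfolding mat_delete_def by (intro eq_matI) auto

lemma cofactor_symmetric:
  assumes "A \<in> carrier_mat n n" "transpose_mat A = A"
  shows "cofactor A i k = cofactor A k i"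
proof -
  have "mat_delete (transpose_mat A) k i = transpose_mat (mat_delete A i k)"
    using assms(1) unfolding mat_delete_def by (intro eq_matI) auto
  moreover have "Determinant.det (transpose_mat (mat_delete A i k)) = Determinant.det (mat_delete A i k)"
    using assms(1) by (intro det_transpose) (auto simp: mat_delete_def)
  ultimately show ?thesis using assms(2) unfolding cofactor_def by (metis add.commute)
qed

lemma sum_lessThan_sum_if_row:
  fixes g :: "nat \<Rightarrow> 'b::comm_monoid_add"
  assumes "p < n" and "S \<subseteq> {..<n}"
  shows "(\<Sum>r<n. \<Sum>c<n. if r = p \<and> c \<in> S then g c else 0) = sum g S"
proof -
  have "(\<Sum>r<n. \<Sum>c<n. if r = p \<and> c \<in> S then g c else 0) = (\<Sum>c<n. if c \<in> S then g c else 0)"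
  proof -
    have "(\<Sum>c<n. if r = p \<and> c \<in> S then g c else 0) =
        (if r = p then (\<Sum>c<n. if c \<in> S then g c else 0) else 0)" for r
      by auto
    thus ?thesis using assms(1) by simp
  qed
  also have "\<dots> = sum g S"
    using assms(2) by (simp add: sum.If_cases Int_absorb1)
  finally show ?thesis .
qed

lemma sum_cofactor_row_col_symmetric:
  fixes g :: "nat \<Rightarrow> 'b::comm_ring_1"
  assumes A: "A \<in> carrier_mat n n" "transpose_mat A = A" and "p < n" and S: "S \<subseteq> {..<n}"
  shows "(\<Sum>r<n. \<Sum>c<n. ((if r = p \<and> c \<in> S then g c else 0) + (if c = p \<and> r \<in> S then g r else 0))
      * cofactor A r c) = 2 * (\<Sum>m\<in>S. g m * cofactor A p m)"
proof -
  have "((if r = p \<and> c \<in> S then g c else 0) + (if c = p \<and> r \<in> S then g r else 0)) * cofactor A r c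
      = (if r = p \<and> c \<in> S then g c * cofactor A p c else 0)
      + (if c = p \<and> r \<in> S then g r * cofactor A p r else 0)" for r c
    using cofactor_symmetric[OF A, of r p] by (simp add: distrib_right)
  moreover have "(\<Sum>r<n. \<Sum>c<n. if c = p \<and> r \<in> S then g r * cofactor A p r else 0)
      = (\<Sum>c<n. \<Sum>r<n. if c = p \<and> r \<in> S then g r * cofactor A p r else 0)"
    by (rule sum.swap)
  ultimately show ?thesis
    by (simp only: sum.distrib sum_lessThan_sum_if_row[OF \<open>p < n\<close> S] mult_2)
qed

lemma det_unit_lower_triangular:
  assumes "A \<in> carrier_mat n n"
    and "\<And>i j. i < j \<Longrightarrow> j < n \<Longrightarrow> A $$ (i,j) = 0" and "\<And>i. i < n \<Longrightarrow> A $$ (i,i) = 1"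
  shows "Determinant.det A = 1"
proof -
  have "diag_mat A = replicate n 1"
    using assms(1,3) by (intro nth_equalityI) (auto simp: diag_mat_def)
  thus ?thesis using det_lower_triangular[OF assms(2,1)] by simp
qed

lemma det_swap_mat_2: "Determinant.det (Matrix.mat 2 2 (\<lambda>(a,b). if a = b then 0 else (1::real))) = -1"
  (is "Determinant.det ?E = _")
proof -
  have E: "?E \<in> carrier_mat 2 2" by auto
  have "Determinant.det ?E = cofactor ?E 0 1"
    by (subst laplace_expansion_row[OF E, of 0]) (simp_all add: numeral_2_eq_2)
  also have "\<dots> = - mat_delete ?E 0 1 $$ (0,0)"
    by (simp add: cofactor_def det_single mat_delete_def)
  finally show ?thesis by (simp add: mat_delete_def)
qed

lemma index_mult_mult_transpose_mat:
  fixes A B C :: "'a::comm_ring_1 Matrix.mat"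
  assumes "A \<in> carrier_mat n n" "B \<in> carrier_mat n n" "C \<in> carrier_mat n n" "r < n" "s < n"
  shows "(A * B * transpose_mat C) $$ (r,s) = (\<Sum>a<n. A $$ (r,a) * (\<Sum>b<n. B $$ (a,b) * C $$ (s,b)))"
  using assms by (simp add: scalar_prod_def atLeast0LessThan)

lemma has_derivative_det:
  fixes M :: "'a::real_normed_vector \<Rightarrow> real Matrix.mat"
  assumes car: "\<And>y. M y \<in> carrier_mat n n"
    and der: "\<And>r c. r < n \<Longrightarrow> c < n \<Longrightarrow> ((\<lambda>y. M y $$ (r,c)) has_derivative M' r c) (at z)"
  shows "((\<lambda>y. Determinant.det (M y)) has_derivative
           (\<lambda>h. \<Sum>r<n. \<Sum>c<n. M' r c h * cofactor (M z) r c)) (at z)"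
proof -
  let ?P = "{\<sigma>. \<sigma> permutes {0..<n}}"
  let ?term = "\<lambda>h \<sigma> i. signof \<sigma> * (M' i (\<sigma> i) h * (\<Prod>k\<in>{0..<n}-{i}. M z $$ (k, \<sigma> k)))"
  have leibniz: "((\<lambda>y. Determinant.det (M y)) has_derivative
      (\<lambda>h. \<Sum>\<sigma>\<in>?P. signof \<sigma> * (\<Sum>i\<in>{0..<n}. M' i (\<sigma> i) h * (\<Prod>k\<in>{0..<n}-{i}. M z $$ (k, \<sigma> k)))))
      (at z)"
    (is "(_ has_derivative ?D) _")
    unfolding det_def'[OF car]
    by (intro has_derivative_sum has_derivative_mult_right has_derivative_prod der)
      (auto dest: permutes_in_image)
  have row_replaced: "(\<Sum>\<sigma>\<in>?P. ?term h \<sigma> i) = (\<Sum>c<n. M' i c h * cofactor (M z) i c)"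
    if i: "i < n" for h i
  proof -
    \<comment> \<open>both sides are the determinant of M z with row i replaced by the derivatives M' i c h\<close>
    define R where "R = Matrix.mat n n (\<lambda>(r,c). if r = i then M' i c h else M z $$ (r,c))"
    have R: "R \<in> carrier_mat n n" unfolding R_def by auto
    have "(\<Sum>\<sigma>\<in>?P. ?term h \<sigma> i) = Determinant.det R"
      unfolding det_def'[OF R]
    proof (intro sum.cong refl)
      fix \<sigma> assume "\<sigma> \<in> ?P"
      hence \<sigma>: "\<And>k. k < n \<Longrightarrow> \<sigma> k < n" by (auto dest: permutes_in_image)
      have "(\<Prod>k = 0..<n. R $$ (k, \<sigma> k)) = R $$ (i, \<sigma> i) * (\<Prod>k\<in>{0..<n}-{i}. R $$ (k, \<sigma> k))"
        using i by (subst prod.remove[of _ i]) auto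
      also have "\<dots> = M' i (\<sigma> i) h * (\<Prod>k\<in>{0..<n}-{i}. M z $$ (k, \<sigma> k))"
        using i \<sigma> by (auto simp: R_def intro!: prod.cong)
      finally show "?term h \<sigma> i = signof \<sigma> * (\<Prod>k = 0..<n. R $$ (k, \<sigma> k))" by simp
    qed
    also have "\<dots> = (\<Sum>c<n. R $$ (i,c) * cofactor R i c)"
      by (rule laplace_expansion_row[OF R i])
    also have "\<dots> = (\<Sum>c<n. M' i c h * cofactor (M z) i c)"
    proof (intro sum.cong refl)
      fix c assume c: "c \<in> {..<n}"
      have "mat_delete R i c = mat_delete (M z) i c"
        by (rule mat_delete_cong_except_row[OF R car]) (auto simp: R_def)
      thus "R $$ (i,c) * cofactor R i c = M' i c h * cofactor (M z) i c"
        using c i by (simp add: R_def cofactor_def)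
    qed
    finally show ?thesis by simp
  qed
  have "?D h = (\<Sum>i\<in>{0..<n}. \<Sum>\<sigma>\<in>?P. ?term h \<sigma> i)" for h
    by (simp add: sum_distrib_left sum.swap[of _ ?P])
  also have "\<dots> h = (\<Sum>r<n. \<Sum>c<n. M' r c h * cofactor (M z) r c)" for h
    using row_replaced by (auto simp: atLeast0LessThan intro!: sum.cong)
  finally have "?D h = (\<Sum>r<n. \<Sum>c<n. M' r c h * cofactor (M z) r c)" for h .
  with leibniz show ?thesis by simp
qed

subsection \<open>Gram determinants\<close>

definition gram_mat :: "nat \<Rightarrow> (nat \<Rightarrow> 'a::real_inner) \<Rightarrow> real Matrix.mat" where
  "gram_mat k v = Matrix.mat k k (\<lambda>(a,b). v a \<bullet> v b)"

definition lin_independent_family :: "nat \<Rightarrow> (nat \<Rightarrow> 'a::real_vector) \<Rightarrow> bool" where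
  "lin_independent_family k v \<longleftrightarrow> (\<forall>z. (\<Sum>a<k. z a *\<^sub>R v a) = 0 \<longrightarrow> (\<forall>a<k. z a = 0))"

lemma lin_independent_family_Suc_imp:
  assumes "lin_independent_family (Suc k) v"
  shows "lin_independent_family k v"
  unfolding lin_independent_family_def
proof (intro allI impI)
  fix z a assume z: "(\<Sum>a<k. z a *\<^sub>R v a) = 0" and a: "a < k"
  have "(\<Sum>b<Suc k. (z(k := 0)) b *\<^sub>R v b) = (\<Sum>b<k. (z(k := 0)) b *\<^sub>R v b)"
    by simp
  also have "\<dots> = (\<Sum>b<k. z b *\<^sub>R v b)"
    by (rule sum.cong) auto
  finally have zero: "(\<Sum>b<Suc k. (z(k := 0)) b *\<^sub>R v b) = 0"
    using z by simp
  have "(z(k := 0)) a = 0"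
    using assms[unfolded lin_independent_family_def, rule_format, OF zero, of a] a by simp
  thus "z a = 0" using a by simp
qed

lemma gram_mat_change_basis:
  fixes v w :: "nat \<Rightarrow> 'a::real_inner"
  assumes T: "T \<in> carrier_mat k k"
    and vw: "\<And>r. r < k \<Longrightarrow> v r = (\<Sum>a<k. T $$ (r,a) *\<^sub>R w a)"
  shows "gram_mat k v = T * gram_mat k w * transpose_mat T"
proof (rule eq_matI)
  fix r s assume "r < dim_row (T * gram_mat k w * transpose_mat T)"
    and "s < dim_col (T * gram_mat k w * transpose_mat T)"
  hence rs: "r < k" "s < k" using T by auto
  have "(T * gram_mat k w * transpose_mat T) $$ (r,s)
      = (\<Sum>a<k. T $$ (r,a) * (\<Sum>b<k. (w a \<bullet> w b) * T $$ (s,b)))"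
    using rs by (subst index_mult_mult_transpose_mat[OF T _ T]) (auto simp: gram_mat_def)
  also have "\<dots> = v r \<bullet> v s"
    using rs by (simp add: vw inner_sum_left inner_sum_right sum_distrib_left mult_ac) (rule sum.swap)
  finally show "gram_mat k v $$ (r,s) = (T * gram_mat k w * transpose_mat T) $$ (r,s)"
    using rs by (simp add: gram_mat_def)
qed (use T in \<open>auto simp: gram_mat_def\<close>)

lemma det_gram_mat_shear:
  fixes v :: "nat \<Rightarrow> 'a::real_inner"
  assumes "v k = u + (\<Sum>a<k. c a *\<^sub>R v a)"
  shows "Determinant.det (gram_mat (Suc k) v) = Determinant.det (gram_mat (Suc k) (v(k := u)))"
proof -
  define T where "T = Matrix.mat (Suc k) (Suc k)
    (\<lambda>(r,a). if r = a then 1 else if r = k then c a else (0::real))"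
  have T: "T \<in> carrier_mat (Suc k) (Suc k)" unfolding T_def by auto
  have detT: "Determinant.det T = 1"
    by (rule det_unit_lower_triangular[OF T]) (auto simp: T_def)
  have "v r = (\<Sum>a<Suc k. T $$ (r,a) *\<^sub>R (v(k := u)) a)" if r: "r < Suc k" for r
  proof (cases "r = k")
    case True
    thus ?thesis using assms by (simp add: T_def add.commute)
  next
    case False
    hence "(\<Sum>a<Suc k. T $$ (r,a) *\<^sub>R (v(k := u)) a) = (\<Sum>a<Suc k. if a = r then v r else 0)"
      using r by (intro sum.cong) (auto simp: T_def)
    thus ?thesis using r by simp
  qed
  hence "gram_mat (Suc k) v = T * gram_mat (Suc k) (v(k := u)) * transpose_mat T"
    by (rule gram_mat_change_basis[OF T])
  thus ?thesis
    using T by (simp add: det_mult[of _ "Suc k"] det_transpose detT gram_mat_def)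
qed

lemma det_gram_mat_orthogonal_last:
  fixes v :: "nat \<Rightarrow> 'a::real_inner"
  assumes "\<And>a. a < k \<Longrightarrow> u \<bullet> v a = 0"
  shows "Determinant.det (gram_mat (Suc k) (v(k := u))) = (u \<bullet> u) * Determinant.det (gram_mat k v)"
proof -
  let ?G = "gram_mat (Suc k) (v(k := u))"
  have G: "?G \<in> carrier_mat (Suc k) (Suc k)" by (simp add: gram_mat_def)
  have "Determinant.det ?G = (\<Sum>b<Suc k. ?G $$ (k,b) * cofactor ?G k b)"
    by (rule laplace_expansion_row[OF G]) simp
  also have "\<dots> = (\<Sum>b<Suc k. if b = k then (u \<bullet> u) * cofactor ?G k k else 0)"
    using assms by (intro sum.cong) (auto simp: gram_mat_def)
  also have "mat_delete ?G k k = gram_mat k v"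
    by (rule eq_matI) (auto simp: mat_delete_def gram_mat_def)
  ultimately show ?thesis by (simp add: cofactor_def)
qed

lemma in_span_image_obtain_coeffs:
  assumes "y \<in> span (f ` A)" and "finite A"
  obtains c where "y = (\<Sum>a\<in>A. c a *\<^sub>R f a)"
proof -
  from assms have "\<exists>c. y = (\<Sum>a\<in>A. c a *\<^sub>R f a)"
  proof (induction rule: span_induct_alt)
    case base
    show ?case by (rule exI[of _ "\<lambda>_. 0"]) simp
  next
    case (step d x y)
    then obtain a0 c where a0: "a0 \<in> A" "x = f a0" and y: "y = (\<Sum>a\<in>A. c a *\<^sub>R f a)" by auto
    show ?case
      using \<open>finite A\<close> a0 y
      by (intro exI[of _ "\<lambda>a. c a + (if a = a0 then d else 0)"])
        (simp add: scaleR_add_left sum.distrib if_distrib[of "\<lambda>t. t *\<^sub>R _"] cong: if_cong)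
  qed
  thus ?thesis using that by blast
qed

text \<open>Gram-Schmidt: the last vector splits into a part in the span of the others, which a shear
  removes without changing the determinant, and a nonzero orthogonal part.\<close>

lemma det_gram_mat_pos:
  fixes v :: "nat \<Rightarrow> 'a::euclidean_space"
  assumes "lin_independent_family k v"
  shows "Determinant.det (gram_mat k v) > 0"
  using assms
proof (induction k arbitrary: v)
  case 0
  show ?case by (simp add: gram_mat_def)
next
  case (Suc k)
  obtain y u where y: "y \<in> span (v ` {..<k})"
    and u: "\<And>w. w \<in> span (v ` {..<k}) \<Longrightarrow> Linear_Algebra.orthogonal u w" and vk: "v k = y + u"
    by (rule orthogonal_subspace_decomp_exists[where S = "v ` {..<k}" and x = "v k"]) blast
  obtain c where c: "y = (\<Sum>a<k. c a *\<^sub>R v a)"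
    using in_span_image_obtain_coeffs[OF y] by blast
  have u_orth: "u \<bullet> v a = 0" if "a < k" for a
    using u[of "v a"] that by (auto simp: Linear_Algebra.orthogonal_def span_base)
  have "u \<noteq> 0"
  proof
    assume "u = 0"
    define z where "z a = (if a = k then 1 else - c a)" for a
    have "(\<Sum>a<Suc k. z a *\<^sub>R v a) = v k - (\<Sum>a<k. c a *\<^sub>R v a)"
      by (simp add: z_def sum_negf)
    also have "\<dots> = 0" using vk c \<open>u = 0\<close> by simp
    finally have "z k = 0" using Suc.prems unfolding lin_independent_family_def by blast
    thus False by (simp add: z_def)
  qed
  have "Determinant.det (gram_mat (Suc k) v) = (u \<bullet> u) * Determinant.det (gram_mat k v)"
    using vk c by (simp add: det_gram_mat_shear[of v k u c] det_gram_mat_orthogonal_last u_orth)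
  moreover have "Determinant.det (gram_mat k v) > 0"
    using Suc.IH lin_independent_family_Suc_imp Suc.prems by blast
  ultimately show ?case using \<open>u \<noteq> 0\<close> by simp
qed

lemma sum_atLeastAtMost_1_Suc_shift:
  fixes f :: "nat \<Rightarrow> 'b::comm_monoid_add"
  shows "(\<Sum>s\<in>{1..j+1}. f s) = f 1 + (\<Sum>a<j. f (a+2))"
  by (induction j) (simp_all add: atLeastAtMostSuc_conv add_ac)

lemma affine_independent_imp_lin_independent_edges:
  fixes x :: "nat \<Rightarrow> 'a::euclidean_space"
  assumes inj: "inj_on x {1..j+1}" and indep: "\<not> affine_dependent (x ` {1..j+1})"
  shows "lin_independent_family j (\<lambda>a. x (a+2) - x 1)"
  unfolding lin_independent_family_def
proof (intro allI impI, rule ccontr)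
  let ?I = "{1..j+1}"
  fix z a0
  assume z: "(\<Sum>a<j. z a *\<^sub>R (x (a+2) - x 1)) = 0" and a0: "a0 < j" "z a0 \<noteq> 0"
  \<comment> \<open>the affine dependence with weight - sum z at x 1 and z a at x (a+2)\<close>
  define g where "g s = (if s = 1 then - (\<Sum>a<j. z a) else z (s - 2))" for s
  define U where "U w = g (inv_into ?I x w)" for w
  have U: "s \<in> ?I \<Longrightarrow> U (x s) = g s" for s unfolding U_def using inj by simp
  have "sum U (x ` ?I) = (\<Sum>s\<in>?I. g s)"
    using inj U by (simp add: sum.reindex)
  also have "\<dots> = 0" unfolding sum_atLeastAtMost_1_Suc_shift by (simp add: g_def)
  finally have weights: "sum U (x ` ?I) = 0" .
  have "(\<Sum>w\<in>x ` ?I. U w *\<^sub>R w) = (\<Sum>s\<in>?I. g s *\<^sub>R x s)"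
    using inj U by (simp add: sum.reindex)
  also have "\<dots> = (\<Sum>a<j. z a *\<^sub>R (x (a+2) - x 1))"
    unfolding sum_atLeastAtMost_1_Suc_shift
    by (simp add: g_def scaleR_diff_right sum_subtractf scaleR_sum_left)
  finally have combination: "(\<Sum>w\<in>x ` ?I. U w *\<^sub>R w) = 0" using z by simp
  have "\<exists>w\<in>x ` ?I. U w \<noteq> 0"
    using a0 U[of "a0+2"] by (intro bexI[of _ "x (a0+2)"]) (auto simp: g_def)
  hence "affine_dependent (x ` ?I)"
    using weights combination by (subst affine_dependent_explicit_finite) auto
  with indep show False by simp
qed

subsection \<open>The Cayley-Menger determinant\<close>

lemma cm_matrix_carrier: "cm_matrix j x \<in> carrier_mat (j+2) (j+2)"
  unfolding cm_matrix_def by auto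

lemma index_cm_matrix:
  "r < j+2 \<Longrightarrow> c < j+2 \<Longrightarrow> cm_matrix j x $$ (r,c) =
    (if r = c then 0 else if r = 0 \<or> c = 0 then 1 else (dist (x r) (x c))\<^sup>2)"
  unfolding cm_matrix_def by auto

lemma transpose_cm_matrix: "transpose_mat (cm_matrix j x) = cm_matrix j x"
  by (rule eq_matI) (auto simp: cm_matrix_def dist_commute)

text \<open>The congruence cm_matrix = L * B' * L^T: with v r = x r - x 1, row r \<ge> 2 of L is
  e r + (v r \<bullet> v r) e 0 + e 1, and B' is [[0,1],[1,0]] \<oplus> (-2) G.\<close>

definition cm_shear :: "nat \<Rightarrow> (nat \<Rightarrow> 'a::real_inner) \<Rightarrow> real Matrix.mat" where
  "cm_shear j x = Matrix.mat (j+2) (j+2) (\<lambda>(r,a).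
     if a = r then 1 else if 2 \<le> r \<and> a = 0 then (x r - x 1) \<bullet> (x r - x 1)
     else if 2 \<le> r \<and> a = 1 then 1 else 0)"

definition cm_reduced :: "nat \<Rightarrow> (nat \<Rightarrow> 'a::real_inner) \<Rightarrow> real Matrix.mat" where
  "cm_reduced j x = Matrix.mat (j+2) (j+2) (\<lambda>(a,b).
     if (a = 0 \<and> b = 1) \<or> (a = 1 \<and> b = 0) then 1
     else if 2 \<le> a \<and> 2 \<le> b then -2 * ((x a - x 1) \<bullet> (x b - x 1)) else 0)"

lemma sum_cm_shear_row:
  fixes f :: "nat \<Rightarrow> real"
  assumes "t < j+2"
  shows "(\<Sum>a<j+2. cm_shear j x $$ (t,a) * f a) =
    (if 2 \<le> t then f t + ((x t - x 1) \<bullet> (x t - x 1)) * f 0 + f 1 else f t)"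
proof -
  have "(\<Sum>a<j+2. cm_shear j x $$ (t,a) * f a) = (\<Sum>a<j+2. (if a = t then f t else 0)
      + (if 2 \<le> t \<and> a = 0 then ((x t - x 1) \<bullet> (x t - x 1)) * f 0 else 0)
      + (if 2 \<le> t \<and> a = 1 then f 1 else 0))"
    using assms by (intro sum.cong) (auto simp: cm_shear_def)
  thus ?thesis using assms by (simp add: sum.distrib)
qed

lemma power2_dist_eq_inner_base:
  fixes a b c :: "'a::real_inner"
  shows "(dist a b)\<^sup>2 = (a - c) \<bullet> (a - c) + (b - c) \<bullet> (b - c) - 2 * ((a - c) \<bullet> (b - c))"
proof -
  have "(dist a b)\<^sup>2 = ((a - c) - (b - c)) \<bullet> ((a - c) - (b - c))"
    by (simp add: dist_norm power2_norm_eq_inner)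
  thus ?thesis by (simp add: inner_diff inner_commute)
qed

lemma cm_matrix_congruence:
  "cm_matrix j x = cm_shear j x * cm_reduced j x * transpose_mat (cm_shear j x)"
proof (rule eq_matI)
  let ?L = "cm_shear j x" and ?B = "cm_reduced j x"
  have L: "?L \<in> carrier_mat (j+2) (j+2)" and B: "?B \<in> carrier_mat (j+2) (j+2)"
    unfolding cm_shear_def cm_reduced_def by auto
  fix r s assume "r < dim_row (?L * ?B * transpose_mat ?L)" "s < dim_col (?L * ?B * transpose_mat ?L)"
  hence r: "r < j+2" and s: "s < j+2" using L by auto
  define g where "g a = (if 2 \<le> s then ?B $$ (a,s) + ((x s - x 1) \<bullet> (x s - x 1)) * ?B $$ (a,0)
    + ?B $$ (a,1) else ?B $$ (a,s))" for a
  have "(?L * ?B * transpose_mat ?L) $$ (r,s) = (\<Sum>a<j+2. ?L $$ (r,a) * (\<Sum>b<j+2. ?L $$ (s,b) * ?B $$ (a,b)))"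
    by (subst index_mult_mult_transpose_mat[OF L B L r s]) (simp add: mult.commute)
  also have "\<dots> = (\<Sum>a<j+2. ?L $$ (r,a) * g a)"
    unfolding g_def by (simp only: sum_cm_shear_row[OF s])
  also have "\<dots> = (if 2 \<le> r then g r + ((x r - x 1) \<bullet> (x r - x 1)) * g 0 + g 1 else g r)"
    by (rule sum_cm_shear_row[OF r])
  also have "\<dots> = cm_matrix j x $$ (r,s)"
    using r s by (cases "r = 0"; cases "r = 1"; cases "s = 0"; cases "s = 1")
      (auto simp: g_def cm_reduced_def index_cm_matrix power2_dist_eq_inner_base[of _ _ "x 1"]
        dist_commute inner_commute)
  finally show "cm_matrix j x $$ (r,s) = (?L * ?B * transpose_mat ?L) $$ (r,s)" by simp
qed (auto simp: cm_matrix_def cm_shear_def)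

lemma det_cm_matrix_gram:
  "Determinant.det (cm_matrix j x) = - ((-2) ^ j * Determinant.det (gram_mat j (\<lambda>a. x (a+2) - x 1)))"
proof -
  let ?L = "cm_shear j x" and ?B = "cm_reduced j x"
  let ?E = "Matrix.mat 2 2 (\<lambda>(a,b). if a = b then 0 else (1::real))"
  let ?G = "gram_mat j (\<lambda>a. x (a+2) - x 1)"
  have L: "?L \<in> carrier_mat (j+2) (j+2)" and B: "?B \<in> carrier_mat (j+2) (j+2)"
    unfolding cm_shear_def cm_reduced_def by auto
  have detL: "Determinant.det ?L = 1"
    by (rule det_unit_lower_triangular[OF L]) (auto simp: cm_shear_def)
  have "\<And>i::nat. \<not> i < 2 \<Longrightarrow> Suc (Suc (i - 2)) = i" by arith
  hence blocks: "?B = four_block_mat ?E (0\<^sub>m 2 j) (0\<^sub>m j 2) ((-2) \<cdot>\<^sub>m ?G)"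
    by (intro eq_matI) (auto simp: cm_reduced_def four_block_mat_def gram_mat_def)
  have "Determinant.det (cm_matrix j x) = Determinant.det ?B"
    unfolding cm_matrix_congruence using L B by (simp add: det_mult[of _ "j+2"] det_transpose detL)
  also have "\<dots> = Determinant.det ?E * Determinant.det ((-2) \<cdot>\<^sub>m ?G)"
    unfolding blocks by (rule det_four_block_mat_upper_right_zero) (auto simp: gram_mat_def)
  also have "\<dots> = - ((-2) ^ j * Determinant.det ?G)"
    by (simp add: det_swap_mat_2 gram_mat_def)
  finally show ?thesis .
qed

lemma det_cm_matrix_sign:
  fixes x :: "nat \<Rightarrow> 'a::euclidean_space"
  assumes "inj_on x {1..j+1}" and "\<not> affine_dependent (x ` {1..j+1})"
  shows "(-1) ^ (j+1) * Determinant.det (cm_matrix j x) > 0"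
proof -
  have "(-1) ^ (j+1) * Determinant.det (cm_matrix j x)
      = 2 ^ j * Determinant.det (gram_mat j (\<lambda>a. x (a+2) - x 1))"
    by (simp add: det_cm_matrix_gram power_mult_distrib[symmetric])
  moreover have "Determinant.det (gram_mat j (\<lambda>a. x (a+2) - x 1)) > 0"
    using assms by (intro det_gram_mat_pos affine_independent_imp_lin_independent_edges)
  ultimately show ?thesis by simp
qed

subsection \<open>Differentiating the content\<close>

lemma has_derivative_dist_sq:
  fixes a z :: "'a::real_inner"
  shows "((\<lambda>y. (dist y a)\<^sup>2) has_derivative (\<lambda>h. 2 * ((z - a) \<bullet> h))) (at z)"
proof -
  have "((\<lambda>y. (y - a) \<bullet> (y - a)) has_derivative (\<lambda>h. (z - a) \<bullet> h + h \<bullet> (z - a))) (at z)"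
    by (intro derivative_eq_intros) auto
  moreover have "(\<lambda>y. (dist y a)\<^sup>2) = (\<lambda>y. (y - a) \<bullet> (y - a))"
    by (simp add: dist_norm power2_norm_eq_inner)
  moreover have "(\<lambda>h. (z - a) \<bullet> h + h \<bullet> (z - a)) = (\<lambda>h. 2 * ((z - a) \<bullet> h))"
    by (auto simp: inner_commute)
  ultimately show ?thesis by simp
qed

lemma has_derivative_index_cm_matrix_update:
  fixes x :: "nat \<Rightarrow> 'a::euclidean_space"
  assumes r: "r < j+2" and c: "c < j+2" and p: "p \<in> {1..j+1}"
  shows "((\<lambda>y. cm_matrix j (x(p := y)) $$ (r,c)) has_derivative
     (\<lambda>h. (if r = p \<and> c \<in> {1..j+1} - {p} then 2 * ((x p - x c) \<bullet> h) else 0)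
        + (if c = p \<and> r \<in> {1..j+1} - {p} then 2 * ((x p - x r) \<bullet> h) else 0))) (at (x p))"
    (is "(_ has_derivative ?D) _")
proof -
  consider "r = c \<or> r = 0 \<or> c = 0" | "r \<noteq> c" "r \<noteq> 0" "c \<noteq> 0" "r = p"
    | "r \<noteq> c" "r \<noteq> 0" "c \<noteq> 0" "c = p" | "r \<noteq> c" "r \<noteq> 0" "c \<noteq> 0" "r \<noteq> p" "c \<noteq> p"
    by blast
  thus ?thesis
  proof cases
    case 1
    hence "(\<lambda>y. cm_matrix j (x(p := y)) $$ (r,c)) = (\<lambda>y. if r = c then 0 else 1)"
      and "?D = (\<lambda>h. 0)"
      using r c p by (auto simp: index_cm_matrix)
    thus ?thesis by simp
  next
    case 2
    hence "(\<lambda>y. cm_matrix j (x(p := y)) $$ (r,c)) = (\<lambda>y. (dist y (x c))\<^sup>2)"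
      and "?D = (\<lambda>h. 2 * ((x p - x c) \<bullet> h))"
      using r c by (auto simp: index_cm_matrix)
    thus ?thesis using has_derivative_dist_sq by metis
  next
    case 3
    hence "(\<lambda>y. cm_matrix j (x(p := y)) $$ (r,c)) = (\<lambda>y. (dist y (x r))\<^sup>2)"
      and "?D = (\<lambda>h. 2 * ((x p - x r) \<bullet> h))"
      using r c by (auto simp: index_cm_matrix dist_commute)
    thus ?thesis using has_derivative_dist_sq by metis
  next
    case 4
    hence "(\<lambda>y. cm_matrix j (x(p := y)) $$ (r,c)) = (\<lambda>y. (dist (x r) (x c))\<^sup>2)"
      and "?D = (\<lambda>h. 0)"
      using r c by (auto simp: index_cm_matrix)
    thus ?thesis by simp
  qed
qed

lemma has_derivative_det_cm_matrix_update:
  fixes x :: "nat \<Rightarrow> 'a::euclidean_space"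
  assumes p: "p \<in> {1..j+1}"
  shows "((\<lambda>y. Determinant.det (cm_matrix j (x(p := y)))) has_derivative
    (\<lambda>h. 2 * ((\<Sum>m\<in>{1..j+1} - {p}. adj_mat (cm_matrix j x) $$ (p, m) *\<^sub>R (2 *\<^sub>R (x p - x m))) \<bullet> h)))
    (at (x p))"
proof -
  let ?S = "{1..j+1} - {p}" and ?M = "cm_matrix j x"
  let ?g = "\<lambda>h m. 2 * ((x p - x m) \<bullet> h)"
  have jacobi: "((\<lambda>y. Determinant.det (cm_matrix j (x(p := y)))) has_derivative
     (\<lambda>h. \<Sum>r<j+2. \<Sum>c<j+2. ((if r = p \<and> c \<in> ?S then ?g h c else 0)
        + (if c = p \<and> r \<in> ?S then ?g h r else 0)) * cofactor (cm_matrix j (x(p := x p))) r c))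
     (at (x p))"
    by (rule has_derivative_det[OF cm_matrix_carrier has_derivative_index_cm_matrix_update[OF _ _ p]])
  have "?S \<subseteq> {..<j+2}" and "p < j+2" using p by auto
  note collapse = sum_cofactor_row_col_symmetric[OF cm_matrix_carrier transpose_cm_matrix this(2,1)]
  have "m \<in> ?S \<Longrightarrow> adj_mat ?M $$ (p, m) = cofactor ?M p m" for m
    using p cofactor_symmetric[OF cm_matrix_carrier transpose_cm_matrix, of j x p m]
    by (simp add: adj_mat_def cm_matrix_def)
  hence "(\<Sum>m\<in>?S. ?g h m * cofactor ?M p m)
      = (\<Sum>m\<in>?S. adj_mat ?M $$ (p, m) *\<^sub>R (2 *\<^sub>R (x p - x m))) \<bullet> h" for h
    by (auto simp: inner_sum_left mult_ac intro!: sum.cong)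
  with jacobi[unfolded fun_upd_triv collapse] show ?thesis by simp
qed

theorem lemma1:
  fixes x :: "nat \<Rightarrow> 'a::euclidean_space" and j p :: nat
  assumes "1 \<le> j" and "j \<le> DIM('a)"
    and "inj_on x {1..j+1}" and "\<not> affine_dependent (x ` {1..j+1})"
    and "p \<in> {1..j+1}"
  shows "((\<lambda>y. distortion j (x(p := y))) has_derivative
          (\<lambda>h. ((((-1) ^ (j+1) / 2 ^ j) / distortion j x) *\<^sub>R
                  (\<Sum>m\<in>{1..j+1} - {p}.
                     adj_mat (cm_matrix j x) $$ (p, m) *\<^sub>R (2 *\<^sub>R (x p - x m)))) \<bullet> h))
         (at (x p))"
proof -
  define K :: real where "K = (-1) ^ (j+1) / (2 ^ j * (fact j)\<^sup>2)"
  define g where "g = (\<Sum>m\<in>{1..j+1} - {p}. adj_mat (cm_matrix j x) $$ (p, m) *\<^sub>R (2 *\<^sub>R (x p - x m)))"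
  have distortion_eq: "distortion j x' = fact j * sqrt (K * Determinant.det (cm_matrix j x'))" for x'
    unfolding distortion_def simplex_content_def K_def ..
  have pos: "K * Determinant.det (cm_matrix j x) > 0"
    using det_cm_matrix_sign[OF assms(3,4)] by (simp add: K_def divide_simps mult.commute)
  have det_deriv: "((\<lambda>y. K * Determinant.det (cm_matrix j (x(p := y)))) has_derivative (\<lambda>h. K * (2 * (g \<bullet> h))))
      (at (x p))"
    unfolding g_def by (intro has_derivative_mult_right has_derivative_det_cm_matrix_update assms(5))
  have "((\<lambda>y. fact j * sqrt (K * Determinant.det (cm_matrix j (x(p := y))))) has_derivative
      (\<lambda>h. fact j * (K * (2 * (g \<bullet> h)) * (inverse (sqrt (K * Determinant.det (cm_matrix j x))) / 2))))
      (at (x p))"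
    by (intro has_derivative_mult_right has_derivative_real_sqrt[OF _ det_deriv, unfolded fun_upd_triv, OF pos])
  moreover have "fact j * (K * (2 * (g \<bullet> h)) * (inverse (sqrt (K * Determinant.det (cm_matrix j x))) / 2))
      = ((((-1) ^ (j+1) / 2 ^ j) / distortion j x) *\<^sub>R g) \<bullet> h" for h
    using pos by (simp add: distortion_eq K_def field_simps power2_eq_square)
  ultimately show ?thesis unfolding distortion_eq g_def by simp
qed

end
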